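(* Let $D_K$ be a relative $K$-entropy satisfying Properties (a) and (b) below. Then for all positive semidefinite operators $S,T,\tilde T$ on a common Hilbert space with $\tilde T\ge T$, $$D_K(S\|T)\ge D_K(S\|\tilde T).$$
   Context: All Hilbert spaces are finite-dimensional. A relative $K$-entropy $D_K$ assigns to every pair $(S,T)$ of positive semidefinite operators on a common Hilbert space an extended real number $D_K(S\|T)$. Properties: (a) for every trace-preserving completely positive map $\mathcal{E}$ (possibly between different spaces), $D_K(\mathcal{E}(S)\|\mathcal{E}(T))\le D_K(S\|T)$; (b) for positive semidefinite $S,T$ on $\mathcal{H}$ and $T'$ on $\mathcal{H}'$, $D_K(S\oplus 0\,\|\,T\oplus T')=D_K(S\|T)$ (operators on $\mathcal{H}\oplus\mathcal{H}'$). *)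

theory Defs
  imports "Jordan_Normal_Form.Matrix" "HOL-Library.Extended_Real"
begin

text \<open>Operators on an n-dimensional Hilbert space are represented by n x n complex matrices.\<close>

definition mtrace :: "complex mat \<Rightarrow> complex" where
  "mtrace A = (\<Sum>i<dim_row A. A $$ (i,i))"

definition psd :: "nat \<Rightarrow> complex mat \<Rightarrow> bool" where
  "psd n A \<longleftrightarrow> A \<in> carrier_mat n n \<and>
     (\<forall>v :: nat \<Rightarrow> complex.
        let q = (\<Sum>i<n. \<Sum>j<n. cnj (v i) * A $$ (i,j) * v j) in Im q = 0 \<and> Re q \<ge> 0)"

text \<open>Ampliation id_k tensor E of a map E from n x n to m x m matrices, acting blockwise
  on a k x k block matrix with n x n blocks.\<close>
definition ampl :: "nat \<Rightarrow> nat \<Rightarrow> nat \<Rightarrow> (complex mat \<Rightarrow> complex mat) \<Rightarrow> complex mat \<Rightarrow> complex mat" where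
  "ampl k n m E X = mat (k*m) (k*m) (\<lambda>(i,j).
     E (mat n n (\<lambda>(a,b). X $$ ((i div m)*n + a, (j div m)*n + b))) $$ (i mod m, j mod m))"

definition linear_map_mat :: "nat \<Rightarrow> nat \<Rightarrow> (complex mat \<Rightarrow> complex mat) \<Rightarrow> bool" where
  "linear_map_mat n m E \<longleftrightarrow>
     (\<forall>A \<in> carrier_mat n n. E A \<in> carrier_mat m m) \<and>
     (\<forall>A \<in> carrier_mat n n. \<forall>B \<in> carrier_mat n n. E (A + B) = E A + E B) \<and>
     (\<forall>A \<in> carrier_mat n n. \<forall>c. E (c \<cdot>\<^sub>m A) = c \<cdot>\<^sub>m E A)"

definition completely_positive :: "nat \<Rightarrow> nat \<Rightarrow> (complex mat \<Rightarrow> complex mat) \<Rightarrow> bool" where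
  "completely_positive n m E \<longleftrightarrow>
     (\<forall>k X. psd (k*n) X \<longrightarrow> psd (k*m) (ampl k n m E X))"

definition trace_preserving :: "nat \<Rightarrow> (complex mat \<Rightarrow> complex mat) \<Rightarrow> bool" where
  "trace_preserving n E \<longleftrightarrow> (\<forall>A \<in> carrier_mat n n. mtrace (E A) = mtrace A)"

definition cptp :: "nat \<Rightarrow> nat \<Rightarrow> (complex mat \<Rightarrow> complex mat) \<Rightarrow> bool" where
  "cptp n m E \<longleftrightarrow> linear_map_mat n m E \<and> completely_positive n m E \<and> trace_preserving n E"

definition prop_a :: "(complex mat \<Rightarrow> complex mat \<Rightarrow> ereal) \<Rightarrow> bool" where
  "prop_a D \<longleftrightarrow> (\<forall>n m E S T. cptp n m E \<longrightarrow> psd n S \<longrightarrow> psd n T \<longrightarrow> D (E S) (E T) \<le> D S T)"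

definition prop_b :: "(complex mat \<Rightarrow> complex mat \<Rightarrow> ereal) \<Rightarrow> bool" where
  "prop_b D \<longleftrightarrow> (\<forall>n n' S T T'. psd n S \<longrightarrow> psd n T \<longrightarrow> psd n' T' \<longrightarrow>
      D (four_block_mat S (0\<^sub>m n n') (0\<^sub>m n' n) (0\<^sub>m n' n'))
        (four_block_mat T (0\<^sub>m n n') (0\<^sub>m n' n) T') = D S T)"

end

theory Submission
  imports Defs
begin

text \<open>Embed \<open>S \<le> T'\<close> as \<open>S \<oplus> 0\<close> versus \<open>T \<oplus> (T' - T)\<close>. By property (b) the relative entropy
  of this pair is \<open>D S T\<close>, and adding up the two diagonal blocks (the partial trace over
  \<open>\<complex>\<^sup>2\<close>, a trace-preserving completely positive map) sends it to the pair \<open>(S, T')\<close>, so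
  property (a) gives \<open>D S T' \<le> D S T\<close>.\<close>

lemma sum_lessThan_add_split:
  "(\<Sum>i<m + n. f i) = (\<Sum>i<m. f i) + (\<Sum>i<n. f (m + i :: nat))"
proof -
  have "(\<Sum>i<m + n. f i) = (\<Sum>i\<in>{0..<m}. f i) + (\<Sum>i\<in>{m..<m + n}. f i)"
    by (simp add: lessThan_atLeast0 sum.atLeastLessThan_concat)
  also have "(\<Sum>i\<in>{m..<m + n}. f i) = (\<Sum>i\<in>{0..<n}. f (m + i))"
    using sum.shift_bounds_nat_ivl[of f 0 m n] by (simp add: add.commute)
  finally show ?thesis by (simp add: lessThan_atLeast0)
qed

definition qform :: "nat \<Rightarrow> complex mat \<Rightarrow> (nat \<Rightarrow> complex) \<Rightarrow> complex" where
  "qform n A v = (\<Sum>i<n. \<Sum>j<n. cnj (v i) * A $$ (i,j) * v j)"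

lemma psd_iff_qform:
  "psd n A \<longleftrightarrow> A \<in> carrier_mat n n \<and> (\<forall>v. Im (qform n A v) = 0 \<and> Re (qform n A v) \<ge> 0)"
  unfolding psd_def qform_def Let_def ..

lemma psd_qform:
  assumes "psd n A"
  shows "Im (qform n A v) = 0" "Re (qform n A v) \<ge> 0"
  using assms by (simp_all add: psd_iff_qform)

lemma psd_zero_mat: "psd n (0\<^sub>m n n)"
  unfolding psd_def by simp

lemma psd_add:
  assumes A: "psd n A" and B: "psd n B"
  shows "psd n (A + B)"
proof -
  have c: "A \<in> carrier_mat n n" "B \<in> carrier_mat n n" using A B by (auto simp: psd_def)
  have "qform n (A + B) v = qform n A v + qform n B v" for v
    using c by (simp add: qform_def distrib_left distrib_right sum.distrib)
  then show ?thesis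
    using c psd_qform[OF A] psd_qform[OF B] by (simp add: psd_iff_qform)
qed

text \<open>Extend \<open>v\<close> by zero off the image of \<open>g\<close>.\<close>
lemma psd_submatrix:
  assumes X: "psd M X" and inj: "inj_on g {..<N}" and rg: "g ` {..<N} \<subseteq> {..<M}"
  shows "psd N (mat N N (\<lambda>(i,j). X $$ (g i, g j)))"
  unfolding psd_iff_qform
proof (intro conjI allI)
  fix v :: "nat \<Rightarrow> complex"
  define G where "G = g ` {..<N}"
  define w where "w l = (if l \<in> G then v (the_inv_into {..<N} g l) else 0)" for l
  have w_g: "w (g i) = v i" if "i < N" for i
    using that inj by (auto simp: w_def G_def the_inv_into_f_f)
  have GM: "G \<subseteq> {..<M}" using rg G_def by auto
  have inner: "(\<Sum>l'<M. cnj (w l) * X $$ (l,l') * w l') = (\<Sum>l'\<in>G. cnj (w l) * X $$ (l,l') * w l')"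
    for l by (rule sum.mono_neutral_right) (use GM in \<open>auto simp: w_def\<close>)
  have "qform M X w = (\<Sum>l\<in>G. \<Sum>l'\<in>G. cnj (w l) * X $$ (l,l') * w l')"
    unfolding qform_def inner
    by (rule sum.mono_neutral_right) (use GM in \<open>auto simp: w_def\<close>)
  also have "\<dots> = qform N (mat N N (\<lambda>(i,j). X $$ (g i, g j))) v"
    unfolding G_def qform_def using inj by (simp add: sum.reindex w_g)
  finally show "Im (qform N (mat N N (\<lambda>(i,j). X $$ (g i, g j))) v) = 0"
    "0 \<le> Re (qform N (mat N N (\<lambda>(i,j). X $$ (g i, g j))) v)"
    using psd_qform[OF X, of w] by simp_all
qed simp

lemma psd_four_block_diag:
  assumes S: "psd n S" and R: "psd m R"
  shows "psd (n + m) (four_block_mat S (0\<^sub>m n m) (0\<^sub>m m n) R)"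
  unfolding psd_iff_qform
proof (intro conjI allI)
  have c: "S \<in> carrier_mat n n" "R \<in> carrier_mat m m" using S R by (auto simp: psd_def)
  then show "four_block_mat S (0\<^sub>m n m) (0\<^sub>m m n) R \<in> carrier_mat (n + m) (n + m)"
    by auto
  fix v :: "nat \<Rightarrow> complex"
  have "qform (n + m) (four_block_mat S (0\<^sub>m n m) (0\<^sub>m m n) R) v
    = qform n S v + qform m R (\<lambda>i. v (n + i))"
    using c by (simp add: qform_def sum_lessThan_add_split sum.distrib)
  then show "Im (qform (n + m) (four_block_mat S (0\<^sub>m n m) (0\<^sub>m m n) R) v) = 0"
    "0 \<le> Re (qform (n + m) (four_block_mat S (0\<^sub>m n m) (0\<^sub>m m n) R) v)"
    using psd_qform[OF S, of v] psd_qform[OF R, of "\<lambda>i. v (n + i)"] by simp_all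
qed

text \<open>The partial trace over \<open>\<complex>\<^sup>2\<close> in the ordering \<open>\<complex>\<^sup>2 \<otimes> \<complex>\<^sup>n\<close>: the sum of the two
  diagonal \<open>n \<times> n\<close> blocks.\<close>
definition partial_trace2 :: "nat \<Rightarrow> complex mat \<Rightarrow> complex mat" where
  "partial_trace2 n X = mat n n (\<lambda>(i,j). X $$ (i,j) + X $$ (n + i, n + j))"

lemma partial_trace2_four_block_mat:
  assumes "A \<in> carrier_mat n n" "D \<in> carrier_mat n n"
  shows "partial_trace2 n (four_block_mat A (0\<^sub>m n n) (0\<^sub>m n n) D) = A + D"
  using assms by (auto intro!: eq_matI simp: partial_trace2_def)

lemma linear_map_partial_trace2: "linear_map_mat (2*n) n (partial_trace2 n)"
  unfolding linear_map_mat_def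
  by (auto intro!: eq_matI simp: partial_trace2_def distrib_left)

lemma trace_preserving_partial_trace2: "trace_preserving (2*n) (partial_trace2 n)"
  unfolding trace_preserving_def mtrace_def partial_trace2_def
  by (auto simp: sum.distrib mult_2 sum_lessThan_add_split)

text \<open>Index \<open>i\<close> of \<open>ampl k (2*n) n E X\<close> (block \<open>i div n\<close>, offset \<open>i mod n\<close>) read at offset
  \<open>c + i mod n\<close> of the corresponding block of \<open>X\<close>; \<open>c = 0\<close> and \<open>c = n\<close> pick out the two
  diagonal sub-blocks that \<open>partial_trace2\<close> adds up.\<close>
definition block_index :: "nat \<Rightarrow> nat \<Rightarrow> nat \<Rightarrow> nat" where
  "block_index n c i = (i div n) * (2*n) + (c + i mod n)"

lemma block_index_div_mod:
  assumes "c \<le> n" "n > 0"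
  shows "block_index n c i div (2*n) = i div n" "block_index n c i mod (2*n) = c + i mod n"
proof -
  have "i mod n < n" using assms(2) by simp
  then have "c + i mod n < 2*n" using assms(1) by linarith
  then show "block_index n c i div (2*n) = i div n" "block_index n c i mod (2*n) = c + i mod n"
    using assms(2) by (simp_all add: block_index_def)
qed

lemma inj_on_block_index:
  assumes "c \<le> n"
  shows "inj_on (block_index n c) {..<k*n}"
proof (rule inj_onI)
  fix a b assume "a \<in> {..<k*n}" "b \<in> {..<k*n}" and eq: "block_index n c a = block_index n c b"
  then have "n > 0" by (cases n) auto
  with eq have "a div n = b div n" "c + a mod n = c + b mod n"
    using block_index_div_mod[OF assms] by metis+
  then show "a = b" by (metis add_left_cancel div_mult_mod_eq)
qed

lemma block_index_less:
  assumes "c \<le> n" "i < k*n"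
  shows "block_index n c i < k*(2*n)"
proof -
  have "n > 0" using assms(2) by (cases n) auto
  then have "i div n < k" using assms(2) by (simp add: div_less_iff_less_mult)
  then have "Suc (i div n) * (2*n) \<le> k*(2*n)" by (intro mult_le_mono1) simp
  moreover have "c + i mod n < 2*n" using assms(1) \<open>n > 0\<close> mod_less_divisor[of n i] by linarith
  ultimately show ?thesis by (simp add: block_index_def)
qed

lemma ampl_partial_trace2:
  "ampl k (2*n) n (partial_trace2 n) X =
     mat (k*n) (k*n) (\<lambda>(i,j). X $$ (block_index n 0 i, block_index n 0 j)) +
     mat (k*n) (k*n) (\<lambda>(i,j). X $$ (block_index n n i, block_index n n j))"
  (is "?L = ?R")
proof (rule eq_matI)
  fix i j assume "i < dim_row ?R" "j < dim_col ?R"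
  then have ij: "i < k*n" "j < k*n" by simp_all
  then have "n > 0" by (cases n) auto
  then have "i mod n < n" "j mod n < n" by simp_all
  then have bounds: "i mod n < 2*n" "j mod n < 2*n" "n + i mod n < 2*n" "n + j mod n < 2*n"
    by linarith+
  with ij show "?L $$ (i, j) = ?R $$ (i, j)"
    by (simp add: ampl_def partial_trace2_def block_index_def add.assoc
        index_mat(1)[OF bounds(1,2)] index_mat(1)[OF bounds(3,4)])
qed (simp_all add: ampl_def)

lemma completely_positive_partial_trace2: "completely_positive (2*n) n (partial_trace2 n)"
  unfolding completely_positive_def ampl_partial_trace2
  by (intro allI impI psd_add psd_submatrix inj_on_block_index) (auto intro: block_index_less)

lemma cptp_partial_trace2: "cptp (2*n) n (partial_trace2 n)"
  unfolding cptp_def using linear_map_partial_trace2 completely_positive_partial_trace2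
    trace_preserving_partial_trace2 by blast

theorem lemma5:
  fixes D :: "complex mat \<Rightarrow> complex mat \<Rightarrow> ereal"
    and n :: nat and S T T' :: "complex mat"
  assumes "prop_a D" and "prop_b D"
    and "psd n S" and "psd n T" and "psd n T'"
    and "psd n (T' - T)"
  shows "D S T \<ge> D S T'"
proof -
  have carrier: "S \<in> carrier_mat n n" "T \<in> carrier_mat n n" "T' \<in> carrier_mat n n"
    using assms(3-5) by (auto simp: psd_def)
  define A where "A = four_block_mat S (0\<^sub>m n n) (0\<^sub>m n n) (0\<^sub>m n n)"
  define B where "B = four_block_mat T (0\<^sub>m n n) (0\<^sub>m n n) (T' - T)"
  have "psd (2*n) A" "psd (2*n) B"
    unfolding A_def B_def mult_2 using assms(3,4,6) psd_zero_mat by (auto intro: psd_four_block_diag)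
  then have "D (partial_trace2 n A) (partial_trace2 n B) \<le> D A B"
    using assms(1) cptp_partial_trace2 unfolding prop_a_def by blast
  moreover have "D A B = D S T"
    using assms(2-4,6) unfolding prop_b_def A_def B_def by blast
  moreover have "partial_trace2 n A = S"
    unfolding A_def using carrier by (simp add: partial_trace2_four_block_mat)
  moreover have "partial_trace2 n B = T + (T' - T)"
    unfolding B_def by (rule partial_trace2_four_block_mat[OF carrier(2) minus_carrier_mat[OF carrier(2)]])
  moreover have "T + (T' - T) = T'"
    using carrier by (auto intro!: eq_matI)
  ultimately show ?thesis by simp
qed

end
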